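(* Let $m\ge1$, $N=2^m$, let $\mathcal{A}\subsetneq[0,N-1]$ (so that $\mathcal{A}^c=[0,N-1]\setminus\mathcal{A}$ is nonempty), and let $\mathbf{P}\in\mathbb{F}_2^{N\times N}$ be upper triangular with unit diagonal. Then $\mathcal{C}_{\boldsymbol{G}_N}([\max(\mathcal{A}^c)+1,N-1])$ is a decreasing monomial code of dimension $N-1-\max(\mathcal{A}^c)$ and $\mathcal{C}_{\boldsymbol{G}_N}([\max(\mathcal{A}^c)+1,N-1])\subset\mathcal{C}_{\mathbf{P}\boldsymbol{G}_N}(\mathcal{A})$.
   Context: $[\ell,u]=\{\ell,\dots,u\}$. $\boldsymbol{G}_N=\begin{pmatrix}1&0\\1&1\end{pmatrix}^{\otimes m}$ over $\mathbb{F}_2$, rows/columns indexed by $0,\dots,N-1$; $\mathcal{C}_{\mathbf{B}}(\mathcal{S})$ is the code spanned by the rows of $\mathbf{B}$ indexed by $\mathcal{S}$. For $i\in[0,N-1]$ write $\mathrm{bin}(i)=(i_0,\dots,i_{m-1})\in\mathbb{F}_2^m$ with $i=\sum_j i_j2^j$, and $\mathbf{x}^{b}=\prod_j x_j^{b_j}$ for $b\in\mathbb{F}_2^m$. Row $i$ of $\boldsymbol{G}_N$ equals the evaluation vector $\mathrm{ev}(\mathbf{x}^{\mathrm{bin}(N-1-i)})$, where $\mathrm{ev}(Q)$ lists the values of $Q\in\mathbb{F}_2[x_0,\dots,x_{m-1}]/(x_j^2-x_j)$ at the points of $\mathbb{F}_2^m$, column $k$ corresponding to the point $\mathrm{bin}(N-1-k)$.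 Thus $\mathcal{C}_{\boldsymbol{G}_N}(\mathcal{S})$ is the monomial code spanned by $\{\mathrm{ev}(f):f\in\mathcal{I}\}$ with $\mathcal{I}=\{\mathbf{x}^{\mathrm{bin}(N-1-i)}:i\in\mathcal{S}\}$. Order on monomials: $f\preceq_w g$ iff $f\mid g$; for $f=x_{i_1}\cdots x_{i_s}$, $g=x_{j_1}\cdots x_{j_s}$ of the same degree with $i_1<\dots<i_s$, $j_1<\dots<j_s$, $f\preceq_{sh}g$ iff $i_\ell\le j_\ell$ for all $\ell$; $f\preceq g$ iff there is a monomial $g^*$ with $f\preceq_{sh}g^*\preceq_w g$. A monomial set $\mathcal{I}$ is decreasing if $f\in\mathcal{I}$ and $g\preceq f$ imply $g\in\mathcal{I}$; a decreasing monomial code is a monomial code with decreasing monomial set. *)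

theory Defs
  imports Complex_Main "HOL-Library.Z2" "HOL-Library.Function_Algebras"
begin

text \<open>Vectors over F_2 of length N are functions nat => bit, zero outside [0,N-1].
  Matrices over F_2 are functions nat => nat => bit (row, column).\<close>

definition sc :: "bit \<Rightarrow> (nat \<Rightarrow> bit) \<Rightarrow> (nat \<Rightarrow> bit)" where
  "sc c v = (\<lambda>k. c * v k)"

global_interpretation f2: vector_space sc
  defines span2 = f2.span
    and dim2 = f2.dim
  by unfold_locales (auto simp: sc_def fun_eq_iff algebra_simps)

definition kron :: "nat \<Rightarrow> (nat \<Rightarrow> nat \<Rightarrow> bit) \<Rightarrow> (nat \<Rightarrow> nat \<Rightarrow> bit) \<Rightarrow> (nat \<Rightarrow> nat \<Rightarrow> bit)" where
  "kron b A B = (\<lambda>i k. A (i div b) (k div b) * B (i mod b) (k mod b))"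

definition G2 :: "nat \<Rightarrow> nat \<Rightarrow> bit" where
  "G2 i k = (if (i = 0 \<and> k = 0) \<or> (i = 1 \<and> k = 0) \<or> (i = 1 \<and> k = 1) then 1 else 0)"

fun GN :: "nat \<Rightarrow> nat \<Rightarrow> nat \<Rightarrow> bit" where
  "GN 0 = (\<lambda>i k. if i = 0 \<and> k = 0 then 1 else 0)"
| "GN (Suc m) = kron (2 ^ m) G2 (GN m)"

definition matmul :: "nat \<Rightarrow> (nat \<Rightarrow> nat \<Rightarrow> bit) \<Rightarrow> (nat \<Rightarrow> nat \<Rightarrow> bit) \<Rightarrow> (nat \<Rightarrow> nat \<Rightarrow> bit)" where
  "matmul N P B = (\<lambda>i k. \<Sum>j<N. P i j * B j k)"

definition row :: "nat \<Rightarrow> (nat \<Rightarrow> nat \<Rightarrow> bit) \<Rightarrow> nat \<Rightarrow> (nat \<Rightarrow> bit)" where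
  "row N B i = (\<lambda>k. if k < N then B i k else 0)"

definition code :: "nat \<Rightarrow> (nat \<Rightarrow> nat \<Rightarrow> bit) \<Rightarrow> nat set \<Rightarrow> (nat \<Rightarrow> bit) set" where
  "code N B S = span2 (row N B ` S)"

text \<open>Monomials in x_0..x_{m-1} modulo x_j^2 = x_j, represented by their variable sets.\<close>
definition monomials :: "nat \<Rightarrow> nat set set" where
  "monomials m = Pow {..<m}"

definition bin :: "nat \<Rightarrow> nat \<Rightarrow> bool" where
  "bin i j = odd (i div 2 ^ j)"

text \<open>Evaluation vector: column k corresponds to the point bin(N-1-k).\<close>
definition ev :: "nat \<Rightarrow> nat set \<Rightarrow> (nat \<Rightarrow> bit)" where
  "ev m f = (\<lambda>k. if k < 2 ^ m then (\<Prod>j\<in>f. if bin (2 ^ m - 1 - k) j then 1 else 0) else 0)"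

definition wle :: "nat set \<Rightarrow> nat set \<Rightarrow> bool" where
  "wle f g \<longleftrightarrow> f \<subseteq> g"

definition shle :: "nat set \<Rightarrow> nat set \<Rightarrow> bool" where
  "shle f g \<longleftrightarrow> card f = card g \<and>
     (\<forall>l < card f. sorted_list_of_set f ! l \<le> sorted_list_of_set g ! l)"

definition mle :: "nat \<Rightarrow> nat set \<Rightarrow> nat set \<Rightarrow> bool" where
  "mle m f g \<longleftrightarrow> (\<exists>g' \<in> monomials m. shle f g' \<and> wle g' g)"

definition decreasing :: "nat \<Rightarrow> nat set set \<Rightarrow> bool" where
  "decreasing m I \<longleftrightarrow> I \<subseteq> monomials m \<and>
     (\<forall>f \<in> I. \<forall>g \<in> monomials m. mle m g f \<longrightarrow> g \<in> I)"

definition monomial_code :: "nat \<Rightarrow> nat set set \<Rightarrow> (nat \<Rightarrow> bit) set" where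
  "monomial_code m I = span2 (ev m ` I)"

definition decreasing_monomial_code :: "nat \<Rightarrow> (nat \<Rightarrow> bit) set \<Rightarrow> bool" where
  "decreasing_monomial_code m C \<longleftrightarrow>
     (\<exists>I. decreasing m I \<and> C = monomial_code m I)"

end

theory Submission
  imports Defs "HOL-Library.Nat_Bijection"
begin

text \<open>Encode a monomial, i.e. a set of variables, as the integer with those binary digits
  (\<open>set_encode\<close>). Then \<open>G\<^sub>N i k = 1\<close> iff the digits of \<open>k\<close> are among those of \<open>i\<close>, so
  row \<open>i\<close> of \<open>G\<^sub>N\<close> evaluates the monomial encoded by \<open>N - 1 - i\<close>, and the last \<open>K\<close> rows
  evaluate the monomials with codes \<open>0, \<dots>, K - 1\<close>. Shifting variables down and dropping
  variables both decrease the code, so these monomials form a decreasing set; as \<open>G\<^sub>N\<close> is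
  lower unitriangular, the rows are independent. If \<open>P\<close> is upper unitriangular, row \<open>i\<close>
  of \<open>P G\<^sub>N\<close> is row \<open>i\<close> of \<open>G\<^sub>N\<close> plus a combination of later rows of \<open>G\<^sub>N\<close>, so by
  downward induction the rows of \<open>G\<^sub>N\<close> indexed by a final segment inside \<open>\<A>\<close> lie in the
  code of \<open>P G\<^sub>N\<close> on \<open>\<A>\<close>.\<close>

lemma sum_fun_apply: "sum f A x = (\<Sum>a\<in>A. f a x)"
  by (induction A rule: infinite_finite_induct) auto

lemma prod_indicator_bit:
  "finite F \<Longrightarrow> (\<Prod>j\<in>F. if Q j then (1::bit) else 0) = (if \<forall>j\<in>F. Q j then 1 else 0)"
  by (induction F rule: finite_induct) auto

lemma Max_diff_atLeastAtMost:
  fixes n :: nat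
  assumes "\<not> {0..n} \<subseteq> A"
  shows "Max ({0..n} - A) \<le> n" and "{Max ({0..n} - A) + 1..n} \<subseteq> A"
proof -
  have fin: "finite ({0..n} - A)" by simp
  have "{0..n} - A \<noteq> {}" using assms by blast
  then show "Max ({0..n} - A) \<le> n" using Max_in[OF fin] by auto
  show "{Max ({0..n} - A) + 1..n} \<subseteq> A"
  proof
    fix i assume i: "i \<in> {Max ({0..n} - A) + 1..n}"
    show "i \<in> A"
    proof (rule ccontr)
      assume "i \<notin> A"
      with i have "i \<in> {0..n} - A" by auto
      then have "i \<le> Max ({0..n} - A)" by (rule Max_ge[OF fin])
      with i show False by auto
    qed
  qed
qed

definition lower_unitriangular :: "nat \<Rightarrow> (nat \<Rightarrow> nat \<Rightarrow> bit) \<Rightarrow> bool" where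
  "lower_unitriangular N B \<longleftrightarrow> (\<forall>i<N. B i i = 1) \<and> (\<forall>i<N. \<forall>k<N. i < k \<longrightarrow> B i k = 0)"

definition upper_unitriangular :: "nat \<Rightarrow> (nat \<Rightarrow> nat \<Rightarrow> bit) \<Rightarrow> bool" where
  "upper_unitriangular N P \<longleftrightarrow> (\<forall>i<N. P i i = 1) \<and> (\<forall>i<N. \<forall>j<N. j < i \<longrightarrow> P i j = 0)"

lemma independent_rows_lower_unitriangular:
  assumes "lower_unitriangular N B" "b \<le> N"
  shows "f2.independent (row N B ` {a..<b})"
  using assms(2)
proof (induction b)
  case 0
  then show ?case by (simp add: f2.independent_empty)
next
  case (Suc b)
  show ?case
  proof (cases "b < a")
    case True
    then show ?thesis using Suc by simp
  next
    case False
    have "span2 (row N B ` {a..<b}) \<subseteq> {v. v b = 0}"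
    proof (rule f2.span_minimal)
      show "row N B ` {a..<b} \<subseteq> {v. v b = 0}"
        using assms(1) Suc.prems by (auto simp: row_def lower_unitriangular_def)
    qed (simp add: f2.subspace_def sc_def)
    moreover have "row N B b b = 1"
      using assms(1) Suc.prems by (simp add: row_def lower_unitriangular_def)
    ultimately have "row N B b \<notin> span2 (row N B ` {a..<b})" by auto
    then have "f2.independent (insert (row N B b) (row N B ` {a..<b}))"
      using Suc by (intro f2.independent_insertI) auto
    moreover have "{a..<Suc b} = insert b {a..<b}" using False by auto
    ultimately show ?thesis by simp
  qed
qed

lemma inj_on_row_lower_unitriangular:
  assumes "lower_unitriangular N B"
  shows "inj_on (row N B) {..<N}"
proof -
  have "row N B i \<noteq> row N B j" if "i < j" "j < N" for i j
  proof -
    have "row N B i j = 0" "row N B j j = 1"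
      using assms that by (auto simp: row_def lower_unitriangular_def)
    then show ?thesis by force
  qed
  then show ?thesis by (metis inj_onI lessThan_iff linorder_neq_iff)
qed

lemma dim_code_lower_unitriangular:
  assumes "lower_unitriangular N B" "b \<le> N"
  shows "dim2 (code N B {a..<b}) = b - a"
proof -
  have "inj_on (row N B) {a..<b}"
    by (rule inj_on_subset[OF inj_on_row_lower_unitriangular[OF assms(1)]]) (use assms(2) in auto)
  then show ?thesis
    unfolding code_def
    using f2.dim_span_eq_card_independent[OF independent_rows_lower_unitriangular[OF assms]]
    by (simp add: card_image)
qed

lemma row_matmul_upper_unitriangular:
  assumes "upper_unitriangular N P" "i < N"
  shows "row N (matmul N P B) i = row N B i + (\<Sum>j\<in>{i<..<N}. sc (P i j) (row N B j))"
proof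
  fix k
  show "row N (matmul N P B) i k = (row N B i + (\<Sum>j\<in>{i<..<N}. sc (P i j) (row N B j))) k"
  proof (cases "k < N")
    case True
    have split: "{..<N} = {..<i} \<union> insert i {i<..<N}" using assms(2) by auto
    have "(\<Sum>j<N. P i j * B j k) =
        (\<Sum>j<i. P i j * B j k) + (P i i * B i k + (\<Sum>j\<in>{i<..<N}. P i j * B j k))"
      unfolding split by (subst sum.union_disjoint) auto
    also have "(\<Sum>j<i. P i j * B j k) = 0"
      using assms by (intro sum.neutral) (auto simp: upper_unitriangular_def)
    also have "P i i = 1" using assms by (simp add: upper_unitriangular_def)
    finally show ?thesis
      using True by (simp add: row_def matmul_def sum_fun_apply sc_def)
  qed (simp add: row_def sum_fun_apply sc_def)
qed

lemma code_atLeastLessThan_subset_code_matmul: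
  assumes "upper_unitriangular N P" "{s..<N} \<subseteq> A"
  shows "code N B {s..<N} \<subseteq> code N (matmul N P B) A"
proof -
  let ?C = "code N (matmul N P B) A"
  have "row N B i \<in> ?C" if "s \<le> i" "i < N" for i
    using that
  proof (induction "N - i" arbitrary: i rule: less_induct)
    case less
    have later: "row N B j \<in> ?C" if "j \<in> {i<..<N}" for j
      using less.hyps[of j] less.prems that by auto
    have "row N (matmul N P B) i \<in> ?C"
      unfolding code_def using assms(2) less.prems by (intro f2.span_base) auto
    moreover have "(\<Sum>j\<in>{i<..<N}. sc (P i j) (row N B j)) \<in> ?C"
      unfolding code_def by (intro f2.span_sum f2.span_scale) (use later in \<open>simp add: code_def\<close>)
    ultimately have "row N (matmul N P B) i - (\<Sum>j\<in>{i<..<N}. sc (P i j) (row N B j)) \<in> ?C"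
      unfolding code_def by (rule f2.span_diff)
    then show ?case
      by (simp add: row_matmul_upper_unitriangular[OF assms(1) less.prems(2)])
  qed
  then have "row N B ` {s..<N} \<subseteq> ?C" by auto
  then show ?thesis
    unfolding code_def[of N B] by (rule f2.span_minimal) (simp add: code_def)
qed

lemma mem_set_decode_iff_bit: "x \<in> set_decode n \<longleftrightarrow> bit n x"
  by (simp add: set_decode_def bit_iff_odd)

lemma bin_iff_mem_set_decode: "bin i j \<longleftrightarrow> j \<in> set_decode i"
  by (simp add: bin_def set_decode_def)

lemma set_decode_subset_lessThan:
  assumes "t < 2 ^ m"
  shows "set_decode t \<subseteq> {..<m}"
proof
  fix x assume "x \<in> set_decode t"
  then have "0 < t div 2 ^ x" by (simp add: set_decode_def odd_pos)
  then have "2 ^ x \<le> t" by (simp add: div_greater_zero_iff)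
  with assms have "(2::nat) ^ x < 2 ^ m" by linarith
  then show "x \<in> {..<m}" by simp
qed

lemma set_decode_complement:
  assumes "t < 2 ^ m"
  shows "set_decode (2 ^ m - 1 - t) = {..<m} - set_decode t"
proof -
  let ?D = "set_decode t"
  have "set_encode ({..<m} - ?D) + set_encode ?D = set_encode (({..<m} - ?D) \<union> ?D)"
    unfolding set_encode_def by (rule sum.union_disjoint[symmetric]) auto
  also have "({..<m} - ?D) \<union> ?D = {..<m}"
    using set_decode_subset_lessThan[OF assms] by blast
  also have "set_encode {..<m} = 2 ^ m - 1"
    unfolding set_encode_def using mask_eq_sum_exp[of m, where 'a=nat] by (simp add: lessThan_def)
  finally have "set_encode ({..<m} - ?D) = 2 ^ m - 1 - t" by simp
  then show ?thesis by (metis finite_Diff finite_lessThan set_encode_inverse)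
qed

lemma set_decode_subset_iff_mod_div:
  "set_decode k \<subseteq> set_decode i \<longleftrightarrow>
     set_decode (k mod 2 ^ m) \<subseteq> set_decode (i mod 2 ^ m) \<and>
     set_decode (k div 2 ^ m) \<subseteq> set_decode (i div 2 ^ m)"
proof -
  have low: "x \<in> set_decode (n mod 2 ^ m) \<longleftrightarrow> x < m \<and> x \<in> set_decode n" for n x
    by (simp add: mem_set_decode_iff_bit bit_take_bit_iff flip: take_bit_eq_mod)
  have high: "x \<in> set_decode (n div 2 ^ m) \<longleftrightarrow> m + x \<in> set_decode n" for n x
    by (simp add: mem_set_decode_iff_bit bit_drop_bit_eq flip: drop_bit_eq_div)
  show ?thesis
  proof
    assume "set_decode k \<subseteq> set_decode i"
    then show "set_decode (k mod 2 ^ m) \<subseteq> set_decode (i mod 2 ^ m) \<and>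
        set_decode (k div 2 ^ m) \<subseteq> set_decode (i div 2 ^ m)"
      by (auto simp: low high)
  next
    assume parts: "set_decode (k mod 2 ^ m) \<subseteq> set_decode (i mod 2 ^ m) \<and>
        set_decode (k div 2 ^ m) \<subseteq> set_decode (i div 2 ^ m)"
    show "set_decode k \<subseteq> set_decode i"
    proof
      fix x assume x: "x \<in> set_decode k"
      show "x \<in> set_decode i"
      proof (cases "x < m")
        case True
        then show ?thesis using x parts low by blast
      next
        case False
        then have "x - m \<in> set_decode (k div 2 ^ m)" using x high[of "x - m" k] by simp
        then have "x - m \<in> set_decode (i div 2 ^ m)" using parts by blast
        then show ?thesis using False high[of "x - m" i] by simp
      qed
    qed
  qed
qed

lemma set_encode_eq_sum_sorted:
  assumes "finite g"
  shows "set_encode g = (\<Sum>l<card g. 2 ^ (sorted_list_of_set g ! l))"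
proof -
  have "set_encode g = sum_list (map ((^) 2) (sorted_list_of_set g))"
    using assms by (simp add: set_encode_def sum_list_distinct_conv_sum_set)
  then show ?thesis by (simp add: sum_list_sum_nth atLeast0LessThan)
qed

lemma mle_imp_set_encode_le:
  assumes "mle m g f" "finite f" "finite g"
  shows "set_encode g \<le> set_encode f"
proof -
  obtain g' where g': "g' \<in> monomials m" "shle g g'" "g' \<subseteq> f"
    using assms(1) by (auto simp: mle_def wle_def)
  have "finite g'" using g'(1) by (auto simp: monomials_def intro: finite_subset)
  have "set_encode g = (\<Sum>l<card g. 2 ^ (sorted_list_of_set g ! l))"
    using assms(3) by (rule set_encode_eq_sum_sorted)
  also have "\<dots> \<le> (\<Sum>l<card g. 2 ^ (sorted_list_of_set g' ! l))"
    using g'(2) by (intro sum_mono) (simp add: shle_def)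
  also have "\<dots> = set_encode g'"
    using \<open>finite g'\<close> g'(2) by (simp add: set_encode_eq_sum_sorted shle_def)
  also have "\<dots> \<le> set_encode f"
    using g'(3) assms(2) by (simp add: set_encode_def sum_mono2)
  finally show ?thesis .
qed

lemma decreasing_set_decode_lessThan:
  assumes "K \<le> 2 ^ m"
  shows "decreasing m (set_decode ` {..<K})"
  unfolding decreasing_def
proof (intro conjI ballI impI)
  have "set_decode t \<in> monomials m" if "t < K" for t
    using that assms set_decode_subset_lessThan[of t m] by (simp add: monomials_def)
  then show "set_decode ` {..<K} \<subseteq> monomials m" by blast
next
  fix f g assume "f \<in> set_decode ` {..<K}" "g \<in> monomials m" "mle m g f"
  moreover have "finite g" using \<open>g \<in> monomials m\<close>
    by (auto simp: monomials_def intro: finite_subset)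
  ultimately have "set_encode g < K"
    using mle_imp_set_encode_le by fastforce
  then show "g \<in> set_decode ` {..<K}"
    using set_encode_inverse[OF \<open>finite g\<close>] by (metis image_eqI lessThan_iff)
qed

lemma G2_set_decode:
  assumes "a < 2" "b < 2"
  shows "G2 a b = (if set_decode b \<subseteq> set_decode a then 1 else 0)"
proof -
  have "x \<in> set_decode 1 \<longleftrightarrow> x = 0" for x
    by (cases x) simp_all
  with assms show ?thesis by (auto simp: G2_def less_2_cases_iff)
qed

lemma GN_set_decode:
  "GN m i k = (if i < 2 ^ m \<and> k < 2 ^ m \<and> set_decode k \<subseteq> set_decode i then 1 else 0)"
proof (induction m arbitrary: i k)
  case 0
  then show ?case by auto
next
  case (Suc m)
  have GN_Suc: "GN (Suc m) i k = G2 (i div 2 ^ m) (k div 2 ^ m) *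
      (if set_decode (k mod 2 ^ m) \<subseteq> set_decode (i mod 2 ^ m) then 1 else 0)"
    by (simp add: kron_def Suc.IH)
  have bounds: "n < 2 * 2 ^ m \<longleftrightarrow> n div 2 ^ m < 2" for n :: nat
    by (auto simp: div_less_iff_less_mult mult.commute)
  show ?case
  proof (cases "i div 2 ^ m < 2 \<and> k div 2 ^ m < 2")
    case True
    then show ?thesis
      unfolding GN_Suc using set_decode_subset_iff_mod_div[of k i m]
      by (auto simp: G2_set_decode bounds)
  next
    case False
    then show ?thesis unfolding GN_Suc by (auto simp: G2_def bounds)
  qed
qed

lemma row_GN_eq_ev:
  assumes "i < 2 ^ m"
  shows "row (2 ^ m) (GN m) i = ev m (set_decode (2 ^ m - 1 - i))"
proof
  fix k
  show "row (2 ^ m) (GN m) i k = ev m (set_decode (2 ^ m - 1 - i)) k"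
  proof (cases "k < 2 ^ m")
    case True
    have "ev m (set_decode (2 ^ m - 1 - i)) k =
        (if \<forall>j\<in>{..<m} - set_decode i. j \<in> {..<m} - set_decode k then 1 else 0)"
      unfolding ev_def bin_iff_mem_set_decode set_decode_complement[OF assms]
        set_decode_complement[OF True]
      using True by (simp add: prod_indicator_bit)
    also have "(\<forall>j\<in>{..<m} - set_decode i. j \<in> {..<m} - set_decode k) \<longleftrightarrow>
        set_decode k \<subseteq> set_decode i"
      using set_decode_subset_lessThan[OF True] set_decode_subset_lessThan[OF assms] by blast
    finally show ?thesis
      using True assms by (simp add: row_def GN_set_decode)
  qed (simp add: row_def ev_def)
qed

lemma row_GN_atLeastLessThan:
  assumes "K \<le> 2 ^ m"
  shows "row (2 ^ m) (GN m) ` {2 ^ m - K..<2 ^ m} = ev m ` set_decode ` {..<K}"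
proof -
  have reflect: "{2 ^ m - K..<2 ^ m} = (\<lambda>t. 2 ^ m - 1 - t) ` {..<K}"
  proof (intro equalityI subsetI)
    fix i assume "i \<in> {2 ^ m - K..<2 ^ m}"
    then show "i \<in> (\<lambda>t. 2 ^ m - 1 - t) ` {..<K}"
      using assms by (intro image_eqI[where x = "2 ^ m - 1 - i"]) auto
  qed (use assms in auto)
  show ?thesis
    unfolding reflect image_image using assms by (intro image_cong) (auto simp: row_GN_eq_ev)
qed

lemma decreasing_monomial_code_GN:
  assumes "K \<le> 2 ^ m"
  shows "decreasing_monomial_code m (code (2 ^ m) (GN m) {2 ^ m - K..<2 ^ m})"
  unfolding decreasing_monomial_code_def code_def monomial_code_def row_GN_atLeastLessThan[OF assms]
  using decreasing_set_decode_lessThan[OF assms] by blast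

lemma lower_unitriangular_GN: "lower_unitriangular (2 ^ m) (GN m)"
  by (auto simp: lower_unitriangular_def GN_set_decode dest: subset_decode_imp_le)

theorem proposition1:
  fixes m N :: nat and A :: "nat set" and P :: "nat \<Rightarrow> nat \<Rightarrow> bit"
  assumes "m \<ge> 1" and "N = 2 ^ m"
    and "A \<subseteq> {0..N-1}" and "A \<noteq> {0..N-1}"
    and "\<forall>i<N. P i i = 1"
    and "\<forall>i<N. \<forall>j<N. j < i \<longrightarrow> P i j = 0"
  shows "decreasing_monomial_code m (code N (GN m) {Max ({0..N-1} - A) + 1..N-1})
       \<and> dim2 (code N (GN m) {Max ({0..N-1} - A) + 1..N-1}) = N - 1 - Max ({0..N-1} - A)
       \<and> code N (GN m) {Max ({0..N-1} - A) + 1..N-1} \<subseteq> code N (matmul N P (GN m)) A"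
proof -
  define M where "M = Max ({0..N-1} - A)"
  define K where "K = N - 1 - M"
  have "\<not> {0..N-1} \<subseteq> A" using assms(3,4) by blast
  then have "M \<le> N - 1" and "{M + 1..N - 1} \<subseteq> A"
    unfolding M_def by (fact Max_diff_atLeastAtMost)+
  moreover have "0 < N" using assms(2) by simp
  ultimately have final_segment: "{M + 1..N - 1} = {N - K..<N}" and "K \<le> N"
    unfolding K_def by auto
  have "upper_unitriangular N P"
    using assms(5,6) by (simp add: upper_unitriangular_def)
  then have subset: "code N (GN m) {N - K..<N} \<subseteq> code N (matmul N P (GN m)) A"
    using \<open>{M + 1..N - 1} \<subseteq> A\<close> unfolding final_segment
    by (rule code_atLeastLessThan_subset_code_matmul)
  have decreasing: "decreasing_monomial_code m (code N (GN m) {N - K..<N})"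
    using decreasing_monomial_code_GN[of K m] \<open>K \<le> N\<close> assms(2) by simp
  have "dim2 (code N (GN m) {N - K..<N}) = N - (N - K)"
    unfolding assms(2) by (rule dim_code_lower_unitriangular[OF lower_unitriangular_GN]) simp
  then have dim: "dim2 (code N (GN m) {N - K..<N}) = N - 1 - M"
    using \<open>K \<le> N\<close> unfolding K_def by simp
  show ?thesis
    unfolding M_def[symmetric] final_segment by (intro conjI decreasing dim subset)
qed

end
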